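(* Let $n\ge 1$, $D\ge 1$, and let $X_n=\{\mathbf{x}^0,\ldots,\mathbf{x}^{n-1}\}\subseteq\{0,1\}^D$ consist of $n$ pairwise distinct vectors. Then there is a three-layer Boolean threshold network with $D$ input nodes, $D^2$ hidden nodes and $2\lceil\log_2 n\rceil$ output nodes whose computed map $\mathbf{f}:\{0,1\}^D\to\{0,1\}^{2\lceil\log_2 n\rceil}$ satisfies $\mathbf{f}(\mathbf{x}^i)\ne\mathbf{f}(\mathbf{x}^j)$ for all $i\neq j$.
   Context: A Boolean threshold function is a map $\{0,1\}^h\to\{0,1\}$ of the form $\mathbf{u}\mapsto[\mathbf{a}\cdot\mathbf{u}\ge\theta]$ (value $1$ iff $\mathbf{a}\cdot\mathbf{u}\ge\theta$) with $\mathbf{a}\in\mathbb{Z}^h$, $\theta\in\mathbb{Z}$. An $L$-layer Boolean threshold network has layers $1,\ldots,L$ of given sizes; layer $1$ is the input; for $t=1,\ldots,L-1$, each node of layer $t+1$ takes as value a Boolean threshold function of the vector of values of layer $t$. The network computes the map from the input vector to the vector of values of layer $L$. Layers $2,\ldots,L-1$ are hidden layers. *)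

theory Defs
  imports Complex_Main
begin

text \<open>Boolean vectors in {0,1}^h are bool lists of length h (True = 1).\<close>

definition threshold_fn :: "int list \<Rightarrow> int \<Rightarrow> bool list \<Rightarrow> bool" where
  "threshold_fn a \<theta> u = ((\<Sum>i<length a. a ! i * of_bool (u ! i)) \<ge> \<theta>)"

definition layer_eval :: "(int list \<times> int) list \<Rightarrow> bool list \<Rightarrow> bool list" where
  "layer_eval W u = map (\<lambda>(a, \<theta>). threshold_fn a \<theta> u) W"

definition layer_wf :: "nat \<Rightarrow> nat \<Rightarrow> (int list \<times> int) list \<Rightarrow> bool" where
  "layer_wf h m W \<longleftrightarrow> length W = m \<and> (\<forall>(a, \<theta>) \<in> set W. length a = h)"

definition threshold_network :: "nat list \<Rightarrow> (int list \<times> int) list list \<Rightarrow> bool" where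
  "threshold_network ls Ws \<longleftrightarrow> ls \<noteq> [] \<and> length Ws = length ls - 1 \<and>
     (\<forall>t < length Ws. layer_wf (ls ! t) (ls ! Suc t) (Ws ! t))"

definition network_eval :: "(int list \<times> int) list list \<Rightarrow> bool list \<Rightarrow> bool list" where
  "network_eval Ws x = foldl (\<lambda>u W. layer_eval W u) x Ws"

end

(*
  Two distinct inputs x, y differ in some coordinate i, and toggling i in S flips exactly one
  of the parities of the weights of x and y on S; hence exactly half of all S \<subseteq> {0..D-1}
  separate x from y by parity. Double counting over the fewer than n^2 \<le> 2^K ordered pairs
  (K = 2 ceil(log2 n) being the number of outputs)
  yields a subset separating at least half of them, and iterating gives K subsets separating
  every pair (for D \<le> K the singletons already do). The parity of the weight of x on S is
  computed by D hidden nodes [weight \<ge> t], t = 1..D, and one output node summing them with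
  alternating signs.
*)

theory Submission
  imports Defs "HOL-Library.Log_Nat"
begin

lemma ex_member_failing_at_most_half:
  fixes R :: "'f \<Rightarrow> 'p \<Rightarrow> bool"
  assumes "finite F" "F \<noteq> {}" "finite P"
    and half: "\<forall>p\<in>P. 2 * card {S\<in>F. \<not> R S p} \<le> card F"
  shows "\<exists>S\<in>F. 2 * card {p\<in>P. \<not> R S p} \<le> card P"
proof (rule ccontr)
  assume "\<not> ?thesis"
  then have "(\<Sum>S\<in>F. card P) < (\<Sum>S\<in>F. 2 * card {p\<in>P. \<not> R S p})"
    using assms(1,2) by (intro sum_strict_mono) auto
  also have "\<dots> = 2 * (\<Sum>p\<in>P. card {S\<in>F. \<not> R S p})"
    using sum_multicount_gen[OF assms(1,3), of "\<lambda>S p. \<not> R S p" "\<lambda>p. card {S\<in>F. \<not> R S p}"]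
    by (simp add: sum_distrib_left[symmetric])
  also have "\<dots> \<le> (\<Sum>p\<in>P. card F)"
    unfolding sum_distrib_left using half by (intro sum_mono) auto
  finally show False by (simp add: mult.commute)
qed

lemma ex_covering_sequence:
  fixes R :: "'f \<Rightarrow> 'p \<Rightarrow> bool"
  assumes "finite F" "F \<noteq> {}" "finite P"
    and "\<forall>p\<in>P. 2 * card {S\<in>F. \<not> R S p} \<le> card F"
    and "card P < 2 ^ m"
  shows "\<exists>S. range S \<subseteq> F \<and> (\<forall>p\<in>P. \<exists>r<m. R (S r) p)"
  using assms(3-)
proof (induction m arbitrary: P)
  case 0
  then show ?case using \<open>F \<noteq> {}\<close> by auto
next
  case (Suc m)
  obtain S0 where "S0 \<in> F" and S0: "2 * card {p\<in>P. \<not> R S0 p} \<le> card P"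
    using ex_member_failing_at_most_half[OF assms(1,2) Suc.prems(1,2)] by blast
  have "card {p\<in>P. \<not> R S0 p} < 2 ^ m"
    using S0 Suc.prems(3) by simp
  then obtain S where "range S \<subseteq> F" and S: "\<forall>p\<in>{p\<in>P. \<not> R S0 p}. \<exists>r<m. R (S r) p"
    using Suc.IH[of "{p\<in>P. \<not> R S0 p}"] Suc.prems(1,2) by auto
  have "\<exists>r<Suc m. R (case_nat S0 S r) p" if "p \<in> P" for p
  proof (cases "R S0 p")
    case False
    then obtain r where "r < m" "R (S r) p" using S \<open>p \<in> P\<close> by blast
    then show ?thesis by (intro exI[of _ "Suc r"]) simp
  qed auto
  moreover have "range (case_nat S0 S) \<subseteq> F"
    using \<open>S0 \<in> F\<close> \<open>range S \<subseteq> F\<close> by (auto split: nat.split simp: image_subset_iff)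
  ultimately show ?case by blast
qed

definition weight_on :: "nat set \<Rightarrow> bool list \<Rightarrow> nat" where
  "weight_on S x = card {i\<in>S. x ! i}"

lemma odd_weight_on_insert:
  assumes "finite S" "i \<notin> S"
  shows "odd (weight_on (insert i S) x) \<longleftrightarrow> odd (weight_on S x) \<noteq> x ! i"
proof -
  have "{j\<in>insert i S. x ! j} = (if x ! i then insert i {j\<in>S. x ! j} else {j\<in>S. x ! j})"
    by auto
  then show ?thesis
    using assms by (simp add: weight_on_def)
qed

lemma odd_weight_on_singleton: "odd (weight_on {i} x) \<longleftrightarrow> x ! i"
  using odd_weight_on_insert[of "{}" i x] by (simp add: weight_on_def)

lemma card_subsets_parity_agree:
  assumes "i < D" "x ! i \<noteq> y ! i"
  shows "2 * card {S\<in>Pow {..<D}. odd (weight_on S x) = odd (weight_on S y)} = 2 ^ D"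
proof -
  define toggle where "toggle S = (if i \<in> S then S - {i} else insert i S)" for S
  let ?agree = "{S\<in>Pow {..<D}. odd (weight_on S x) = odd (weight_on S y)}"
  let ?differ = "{S\<in>Pow {..<D}. odd (weight_on S x) \<noteq> odd (weight_on S y)}"
  have toggle_flips:
    "odd (weight_on (toggle S) x) = odd (weight_on (toggle S) y)
       \<longleftrightarrow> odd (weight_on S x) \<noteq> odd (weight_on S y)" if "finite S" for S
  proof (cases "i \<in> S")
    case True
    then have "odd (weight_on S z) \<longleftrightarrow> odd (weight_on (S - {i}) z) \<noteq> z ! i" for z
      using odd_weight_on_insert[of "S - {i}" i z] that by (simp add: insert_absorb)
    then show ?thesis
      using True assms(2) by (auto simp: toggle_def)
  next
    case False
    then show ?thesis
      using that assms(2) by (auto simp: toggle_def odd_weight_on_insert)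
  qed
  have toggle_toggle: "toggle (toggle S) = S" for S
    by (auto simp: toggle_def)
  have toggle_Pow: "toggle S \<in> Pow {..<D} \<longleftrightarrow> S \<in> Pow {..<D}" for S
    using assms(1) by (auto simp: toggle_def)
  have "bij_betw toggle ?agree ?differ"
  proof (rule bij_betw_byWitness[where f' = toggle])
    show "toggle ` ?agree \<subseteq> ?differ" "toggle ` ?differ \<subseteq> ?agree"
      using toggle_flips toggle_Pow finite_subset[OF _ finite_lessThan] by (auto simp del: Pow_iff)
  qed (simp_all add: toggle_toggle)
  then have "card ?agree = card ?differ"
    by (rule bij_betw_same_card)
  moreover have "card ?agree + card ?differ = card (Pow {..<D})"
    by (subst card_Un_disjoint[symmetric]) (auto intro: arg_cong[where f = card])
  ultimately show ?thesis
    by (simp add: card_Pow)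
qed

lemma ex_parity_separating_subsets:
  fixes X :: "nat \<Rightarrow> bool list"
  assumes "\<forall>i<n. length (X i) = D" "inj_on X {..<n}" "n ^ 2 \<le> 2 ^ K"
  shows "\<exists>S. (\<forall>r<D. S r \<subseteq> {..<D}) \<and>
    (\<forall>i<n. \<forall>j<n. i \<noteq> j \<longrightarrow>
      (\<exists>r<min D K. odd (weight_on (S r) (X i)) \<noteq> odd (weight_on (S r) (X j))))"
proof -
  have ex_nth_neq: "\<exists>d<D. X i ! d \<noteq> X j ! d" if "i < n" "j < n" "i \<noteq> j" for i j
  proof -
    have "X i \<noteq> X j"
      using assms(2) that by (auto dest: inj_onD)
    then show ?thesis
      using assms(1) that by (auto simp: list_eq_iff_nth_eq)
  qed
  show ?thesis
  proof (cases "D \<le> K")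
    case True
    show ?thesis
      by (rule exI[of _ "\<lambda>r. {r}"]) (use True ex_nth_neq in \<open>auto simp: odd_weight_on_singleton\<close>)
  next
    case False
    define P where "P = {(i, j). i < n \<and> j < n \<and> i \<noteq> j}"
    have "card P < 2 ^ K"
    proof (cases "n = 0")
      case False
      have "P \<subset> {..<n} \<times> {..<n}"
        using False by (auto simp: P_def)
      then have "card P < n ^ 2"
        by (metis card_cartesian_product card_lessThan finite_SigmaI finite_lessThan
            power2_eq_square psubset_card_mono)
      with assms(3) show ?thesis by simp
    qed (simp add: P_def)
    moreover have "finite P"
      by (rule finite_subset[of _ "{..<n} \<times> {..<n}"]) (auto simp: P_def)
    moreover have "\<forall>(i, j)\<in>P. 2 * card {S\<in>Pow {..<D}.
        \<not> odd (weight_on S (X i)) \<noteq> odd (weight_on S (X j))} \<le> card (Pow {..<D})"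
    proof (clarsimp simp: P_def card_Pow)
      fix i j assume "i < n" "j < n" "i \<noteq> j"
      then obtain d where "d < D" "X i ! d \<noteq> X j ! d"
        using ex_nth_neq by blast
      from card_subsets_parity_agree[OF this] show "2 * card {S. S \<subseteq> {..<D} \<and>
          even (weight_on S (X i)) = even (weight_on S (X j))} \<le> 2 ^ D"
        by simp
    qed
    ultimately obtain S where "range S \<subseteq> Pow {..<D}" and
      "\<forall>(i, j)\<in>P. \<exists>r<K. odd (weight_on (S r) (X i)) \<noteq> odd (weight_on (S r) (X j))"
      using ex_covering_sequence[of "Pow {..<D}" P
          "\<lambda>S (i, j). odd (weight_on S (X i)) \<noteq> odd (weight_on S (X j))" K]
      by (auto simp: case_prod_unfold)
    then show ?thesis
      using False by (intro exI[of _ S]) (auto simp: P_def)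
  qed
qed

definition indicator_weights :: "nat \<Rightarrow> nat set \<Rightarrow> int list" where
  "indicator_weights D S = map (\<lambda>i. of_bool (i \<in> S)) [0..<D]"

lemma threshold_fn_indicator_weights:
  assumes "S \<subseteq> {..<D}"
  shows "threshold_fn (indicator_weights D S) \<theta> x \<longleftrightarrow> \<theta> \<le> int (weight_on S x)"
proof -
  have "(\<Sum>i<length (indicator_weights D S). indicator_weights D S ! i * of_bool (x ! i))
      = (\<Sum>i<D. of_bool (i \<in> S \<and> x ! i))"
    by (intro sum.cong) (auto simp: indicator_weights_def)
  also have "\<dots> = int (weight_on S x)"
    using assms by (auto simp: weight_on_def intro: arg_cong[where f = card])
  finally show ?thesis
    by (simp add: threshold_fn_def)
qed

lemma weight_on_le:
  assumes "S \<subseteq> {..<D}"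
  shows "weight_on S x \<le> D"
  using card_mono[of "{..<D}" "{i\<in>S. x ! i}"] assms by (auto simp: weight_on_def)

lemma sum_alternating_lessThan: "(\<Sum>t<C. (-1::int) ^ t) = of_bool (odd C)"
  by (induction C) auto

lemma sum_alternating_indicator_less:
  assumes "C \<le> N"
  shows "(\<Sum>t<N. (-1::int) ^ t * of_bool (t < C)) = of_bool (odd C)"
proof -
  have "{..<N} \<inter> {t. t < C} = {..<C}"
    using assms by auto
  then show ?thesis
    by (simp add: sum_alternating_lessThan)
qed

lemma sum_block_div:
  fixes g :: "nat \<Rightarrow> 'a::comm_monoid_add"
  assumes "r < m"
  shows "(\<Sum>q<m * D. if q div D = r then g (q mod D) else 0) = (\<Sum>t<D. g t)"
proof -
  have block: "{q\<in>{..<m * D}. q div D = r} = (\<lambda>t. r * D + t) ` {..<D}"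
  proof (intro set_eqI iffI)
    fix q assume q: "q \<in> {q\<in>{..<m * D}. q div D = r}"
    then have "D > 0"
      by (cases "D = 0") auto
    then have "q mod D < D"
      by simp
    moreover have "q = r * D + q mod D"
      using q div_mult_mod_eq[of q D] by simp
    ultimately show "q \<in> (\<lambda>t. r * D + t) ` {..<D}"
      by (metis imageI lessThan_iff)
  next
    fix q assume "q \<in> (\<lambda>t. r * D + t) ` {..<D}"
    then obtain t where "t < D" "q = r * D + t" by blast
    moreover have "r * D + D \<le> m * D"
      using assms by (metis add.commute mult_Suc mult_le_mono1 Suc_leI)
    ultimately show "q \<in> {q\<in>{..<m * D}. q div D = r}"
      by auto
  qed
  have "(\<Sum>q<m * D. if q div D = r then g (q mod D) else 0)
      = (\<Sum>q\<in>{q\<in>{..<m * D}. q div D = r}. g (q mod D))"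
    by (rule sum.inter_filter[symmetric]) simp
  also have "\<dots> = (\<Sum>t<D. g ((r * D + t) mod D))"
    unfolding block by (subst sum.reindex) (auto simp: inj_on_def)
  also have "\<dots> = (\<Sum>t<D. g t)"
    by simp
  finally show ?thesis .
qed

text \<open>Hidden node q = r * D + t fires iff the input has at least t + 1 ones in S r.\<close>

definition count_layer :: "nat \<Rightarrow> (nat \<Rightarrow> nat set) \<Rightarrow> (int list \<times> int) list" where
  "count_layer D S =
     map (\<lambda>q. (indicator_weights D (S (q div D)), int (q mod D) + 1)) [0..<D * D]"

definition parity_layer :: "nat \<Rightarrow> nat \<Rightarrow> (int list \<times> int) list" where
  "parity_layer D K =
     map (\<lambda>r. (map (\<lambda>q. if q div D = r then (-1) ^ (q mod D) else 0) [0..<D * D], 1)) [0..<K]"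

lemma threshold_network_parity:
  "threshold_network [D, D ^ 2, K] [count_layer D S, parity_layer D K]"
  by (auto simp: threshold_network_def layer_wf_def count_layer_def parity_layer_def
      indicator_weights_def power2_eq_square less_Suc_eq)

lemma network_eval_parity:
  assumes "\<forall>r<D. S r \<subseteq> {..<D}" "r < D" "r < K"
  shows "network_eval [count_layer D S, parity_layer D K] x ! r \<longleftrightarrow> odd (weight_on (S r) x)"
proof -
  define h where "h = layer_eval (count_layer D S) x"
  define a where "a = map (\<lambda>q. if q div D = r then (-1::int) ^ (q mod D) else 0) [0..<D * D]"
  define w where "w = weight_on (S r) x"
  have h: "h ! q \<longleftrightarrow> q mod D < weight_on (S (q div D)) x" if "q < D * D" for q
  proof -
    have "q div D < D"
      using that by (simp add: less_mult_imp_div_less)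
    then show ?thesis
      using that assms(1)
      by (auto simp: h_def layer_eval_def count_layer_def threshold_fn_indicator_weights)
  qed
  have eval: "network_eval [count_layer D S, parity_layer D K] x ! r \<longleftrightarrow>
      1 \<le> (\<Sum>q<length a. a ! q * of_bool (h ! q))"
    unfolding threshold_fn_def[symmetric]
    using assms(3) by (simp add: network_eval_def h_def layer_eval_def parity_layer_def a_def)
  have "(\<Sum>q<length a. a ! q * of_bool (h ! q)) =
      (\<Sum>q<D * D. if q div D = r then (-1) ^ (q mod D) * of_bool (q mod D < w) else 0)"
    by (intro sum.cong) (auto simp: a_def h w_def)
  also have "\<dots> = (\<Sum>t<D. (-1) ^ t * of_bool (t < w))"
    using assms(2) by (rule sum_block_div)
  also have "\<dots> = of_bool (odd w)"
    using assms(1,2) weight_on_le unfolding w_def by (intro sum_alternating_indicator_less) blast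
  finally show ?thesis
    unfolding eval w_def by simp
qed

theorem theorem9:
  fixes n D :: nat and X :: "nat \<Rightarrow> bool list"
  assumes "n \<ge> 1" and "D \<ge> 1"
    and "\<forall>i<n. length (X i) = D"
    and "inj_on X {..<n}"
  shows "\<exists>Ws. threshold_network [D, D ^ 2, 2 * nat \<lceil>log 2 (real n)\<rceil>] Ws \<and>
           (\<forall>i<n. \<forall>j<n. i \<noteq> j \<longrightarrow> network_eval Ws (X i) \<noteq> network_eval Ws (X j))"
proof -
  define K where "K = 2 * nat \<lceil>log 2 (real n)\<rceil>"
  have "n \<le> 2 ^ ceillog2 n"
    using ceillog2_le_iff[of n "ceillog2 n"] assms(1) by simp
  then have "n ^ 2 \<le> (2 ^ ceillog2 n) ^ 2"
    by (rule power_mono) simp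
  also have "\<dots> = 2 ^ K"
    using assms(1) by (simp add: K_def ceillog2_def mult.commute flip: power_mult)
  finally obtain S where S: "\<forall>r<D. S r \<subseteq> {..<D}" and separating:
      "\<forall>i<n. \<forall>j<n. i \<noteq> j \<longrightarrow>
        (\<exists>r<min D K. odd (weight_on (S r) (X i)) \<noteq> odd (weight_on (S r) (X j)))"
    using ex_parity_separating_subsets[OF assms(3,4)] by blast
  have "network_eval [count_layer D S, parity_layer D K] (X i) \<noteq>
      network_eval [count_layer D S, parity_layer D K] (X j)" if "i < n" "j < n" "i \<noteq> j" for i j
    using separating that network_eval_parity[OF S] by (metis min_less_iff_conj)
  then show ?thesis
    using threshold_network_parity unfolding K_def by blast
qed

end
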